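(* Let $\mathbf{H}$ be a real symmetric $d\times d$ matrix and $\mathbf{H}(\omega)$ random symmetric matrices with $\mathbb{E}\,\mathbf{H}(\omega)=\mathbf{H}$, $\mathbb{E}\|\mathbf{H}(\omega)\|_2^2\le\sigma^2$, $\|\mathbf{H}(\omega)\|_2\le G_1$; let $\alpha(n)>0$ with $\sum\alpha(n)=\infty$, $\sum\alpha(n)^2<\infty$. Let $2\le\bar k\le d$ and let $\mathbf{v}_1,\dots,\mathbf{v}_{\bar k-1}$ be orthonormal eigenvectors of $\mathbf{H}$. Let $\mathbf{v}(0)$ be a unit vector orthogonal to $\mathbf{v}_1,\dots,\mathbf{v}_{\bar k-1}$ and define $$\hat{\mathbf{v}}(n+1)=\mathbf{v}(n)-\alpha(n)\Big(I-\mathbf{v}(n)\mathbf{v}(n)^\top-\sum_{i=1}^{\bar k-1}\mathbf{v}_i\mathbf{v}_i^\top\Big)\mathbf{H}(\omega(n))\mathbf{v}(n),\qquad \mathbf{v}(n+1)=\frac{\hat{\mathbf{v}}(n+1)}{\|\hat{\mathbf{v}}(n+1)\|_2},$$ with $\omega(n)$ independent fresh samples. Then, almost surely, every limit point $\mathbf{v}_\infty$ of $(\mathbf{v}(n))$ with $\mathbf{v}_\infty\notin\mathrm{span}\{\mathbf{v}_1,\dots,\mathbf{v}_{\bar k-1}\}$ lies in an eigenspace of $\mathbf{H}$, i.e. is an eigenvector of $\mathbf{H}$. *)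

theory Defs
  imports "HOL-Probability.Probability"
begin

definition outer :: "real^'d \<Rightarrow> real^'d \<Rightarrow> real^'d^'d" where
  "outer u w = (\<chi> i j. u $ i * w $ j)"

definition spec_norm :: "real^'d^'d \<Rightarrow> real" where
  "spec_norm A = onorm (\<lambda>x. A *v x)"

definition oja_step ::
  "real \<Rightarrow> (nat \<Rightarrow> real^'d) \<Rightarrow> nat \<Rightarrow> real^'d^'d \<Rightarrow> real^'d \<Rightarrow> real^'d" where
  "oja_step a vs kbar Hw v =
     (let vhat = v - a *\<^sub>R ((mat 1 - outer v v - (\<Sum>i\<in>{1..<kbar}. outer (vs i) (vs i))) ** Hw *v v)
      in (1 / norm vhat) *\<^sub>R vhat)"

(* the iterates v(n), driven by the sampled matrices Hseq n = H(omega(n)) *)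
fun oja_iter ::
  "(nat \<Rightarrow> real) \<Rightarrow> (nat \<Rightarrow> real^'d) \<Rightarrow> nat \<Rightarrow> real^'d \<Rightarrow> (nat \<Rightarrow> real^'d^'d) \<Rightarrow> nat \<Rightarrow> real^'d" where
  "oja_iter \<alpha> vs kbar v0 Hseq 0 = v0"
| "oja_iter \<alpha> vs kbar v0 Hseq (Suc n) =
     oja_step (\<alpha> n) vs kbar (Hseq n) (oja_iter \<alpha> vs kbar v0 Hseq n)"

definition limit_point :: "(nat \<Rightarrow> 'a::topological_space) \<Rightarrow> 'a \<Rightarrow> bool" where
  "limit_point X l \<longleftrightarrow> (\<exists>r. strict_mono r \<and> (X \<circ> r) \<longlonglongrightarrow> l)"

end

theory Submission
  imports Defs
begin

(* The iteration is stochastic gradient descent for the Rayleigh quotient f(v) = v . H v on the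
   unit sphere of span{v_1, ..., v_(kbar-1)}^perp, which the iterates never leave. With the
   Riemannian gradient g(v) = H v - f(v) v, one step satisfies
     f(v(n+1)) <= f(v(n)) - 2 alpha(n) g(v(n)) . H(omega(n)) v(n) + K alpha(n)^2,
   and as omega(n) is independent of v(n), the middle term has mean 2 alpha(n) E |g(v(n))|^2.
   Telescoping against the bounded f gives sum alpha(n) E |g(v(n))|^2 < oo, so almost surely
   sum alpha(n) |g(v(n))|^2 < oo. Since the steps are O(alpha(n)) and sum alpha(n) = oo, the
   continuous function |g|^2 vanishes at every limit point: limit points are eigenvectors. *)

section \<open>Matrices\<close>

lemma outer_mult_vec: "outer u w *v y = (w \<bullet> y) *\<^sub>R u"
  by (simp add: vec_eq_iff outer_def matrix_vector_mult_def inner_vec_def sum_distrib_left mult_ac)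

lemma sum_matrix_vector_mult: "(\<Sum>i\<in>A. F i) *v (y::real^'n) = (\<Sum>i\<in>A. F i *v y)"
  by (simp add: vec_eq_iff matrix_vector_mult_def sum_component sum_distrib_right sum.swap[where A=A])

lemma inner_symmetric_matrix_vector_mult:
  "transpose (A::real^'n^'n) = A \<Longrightarrow> x \<bullet> (A *v y) = (A *v x) \<bullet> y"
  by (metis dot_lmul_matrix transpose_matrix_vector)

lemma inner_matrix_vector_mult_expand:
  "x \<bullet> (A *v y) = (\<Sum>i\<in>UNIV. \<Sum>j\<in>UNIV. (x $ i * y $ j) * A $ i $ j)"
  by (simp add: inner_vec_def matrix_vector_mult_def sum_distrib_left mult_ac)

lemma norm_matrix_vector_mult_le: "norm (A *v x) \<le> spec_norm A * norm x"
  unfolding spec_norm_def by (rule onorm[OF matrix_vector_mul_bounded_linear])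

lemma spec_norm_nonneg: "0 \<le> spec_norm A"
  unfolding spec_norm_def by (rule onorm_pos_le[OF matrix_vector_mul_bounded_linear])

lemma abs_matrix_entry_le_spec_norm: "\<bar>A $ i $ j\<bar> \<le> spec_norm A"
proof -
  have "\<bar>A $ i $ j\<bar> = \<bar>(A *v axis j 1) $ i\<bar>"
    by (simp add: matrix_vector_mult_def axis_def if_distrib cong: if_cong)
  also have "\<dots> \<le> norm (A *v axis j 1)" by (rule component_le_norm_cart)
  also have "\<dots> \<le> spec_norm A" using norm_matrix_vector_mult_le[of A "axis j 1"] by simp
  finally show ?thesis .
qed

lemma borel_measurable_vec_nth[measurable (raw)]:
  fixes f :: "'a \<Rightarrow> 'b::euclidean_space ^ 'n"
  shows "f \<in> borel_measurable M \<Longrightarrow> (\<lambda>x. f x $ i) \<in> borel_measurable M"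
  by (rule measurable_compose[of f M borel])
     (auto intro!: borel_measurable_continuous_onI continuous_on_component continuous_on_id)

lemma continuous_on_matrix_vector_mult_pair:
  "continuous_on UNIV (\<lambda>p :: (real^'n^'m) \<times> (real^'n). fst p *v snd p)"
  unfolding matrix_vector_mult_def
  by (intro continuous_on_vec_lambda continuous_intros continuous_on_component)

lemma borel_measurable_matrix_vector_mult[measurable (raw)]:
  fixes f :: "'a \<Rightarrow> real^'n^'m" and g :: "'a \<Rightarrow> real^'n"
  assumes "f \<in> borel_measurable M" "g \<in> borel_measurable M"
  shows "(\<lambda>x. f x *v g x) \<in> borel_measurable M"
  using assms continuous_on_matrix_vector_mult_pair by (rule borel_measurable_continuous_Pair)

section \<open>Limit points and summability\<close>

lemma norm_diff_le_sum_steps: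
  fixes v :: "nat \<Rightarrow> 'a::real_normed_vector"
  assumes step: "\<And>n. norm (v (Suc n) - v n) \<le> C * \<alpha> n" and "m \<le> n"
  shows "norm (v n - v m) \<le> C * sum \<alpha> {m..<n}"
proof -
  have "norm (v n - v m) = norm (\<Sum>i = m..<n. v (Suc i) - v i)"
    using \<open>m \<le> n\<close> by (simp add: sum_Suc_diff')
  also have "\<dots> \<le> (\<Sum>i = m..<n. C * \<alpha> i)" by (intro order_trans[OF norm_sum] sum_mono step)
  finally show ?thesis by (simp add: sum_distrib_left)
qed

lemma not_summable_obtain_first_exceeding:
  fixes \<alpha> :: "nat \<Rightarrow> real"
  assumes nonneg: "\<And>n. 0 \<le> \<alpha> n" and "\<not> summable \<alpha>"
  obtains K where "c \<le> sum \<alpha> {n0..<K}" "\<And>k. k < K \<Longrightarrow> sum \<alpha> {n0..<k} < c"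
proof -
  have "\<exists>K. c \<le> sum \<alpha> {n0..<K}"
  proof (rule ccontr)
    assume "\<nexists>K. c \<le> sum \<alpha> {n0..<K}"
    then have tail: "sum \<alpha> {n0..<K} < c" for K by (meson not_le)
    have "sum \<alpha> {..<n} \<le> sum \<alpha> {..<n0} + c" for n
    proof -
      have "sum \<alpha> {..<n} \<le> sum \<alpha> {..<max n n0}" by (intro sum_mono2) (auto simp: nonneg)
      also have "\<dots> = sum \<alpha> {..<n0} + sum \<alpha> {n0..<max n n0}"
        by (simp add: lessThan_atLeast0 sum.atLeastLessThan_concat)
      finally show ?thesis using tail[of "max n n0"] by linarith
    qed
    then have "summable \<alpha>" by (intro summableI_nonneg_bounded nonneg)
    with \<open>\<not> summable \<alpha>\<close> show False ..
  qed
  then have "c \<le> sum \<alpha> {n0..<(LEAST K. c \<le> sum \<alpha> {n0..<K})}" by (rule LeastI_ex)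
  moreover have "sum \<alpha> {n0..<k} < c" if "k < (LEAST K. c \<le> sum \<alpha> {n0..<K})" for k
    using not_less_Least[OF that] by simp
  ultimately show thesis by (rule that)
qed

text \<open>If \<open>h l > 0\<close>, then \<open>h > e\<close> on a ball around \<open>l\<close>. Since the steps are at most \<open>C \<alpha> n\<close> and
  \<open>\<Sum> \<alpha> = \<infinity>\<close>, after each late visit of the ball of half the radius the sequence stays in the ball
  until \<open>\<Sum> \<alpha>\<close> has grown by \<open>d / C\<close>, so \<open>\<Sum> \<alpha> n * h (v n)\<close> has arbitrarily late blocks of size
  at least \<open>e d / C\<close>.\<close>

lemma limit_point_zero_of_summable_weighted:
  fixes v :: "nat \<Rightarrow> 'a::real_normed_vector" and h :: "'a \<Rightarrow> real"
  assumes step: "\<And>n. norm (v (Suc n) - v n) \<le> C * \<alpha> n" and "0 < C"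
    and \<alpha>_nonneg: "\<And>n. 0 \<le> \<alpha> n" and "\<not> summable \<alpha>"
    and h_nonneg: "\<And>x. 0 \<le> h x" and summable: "summable (\<lambda>n. \<alpha> n * h (v n))"
    and "isCont h l" and "limit_point v l"
  shows "h l = 0"
proof (rule ccontr)
  assume "h l \<noteq> 0"
  define e where "e = h l / 2"
  have "0 < e" using \<open>h l \<noteq> 0\<close> h_nonneg[of l] by (simp add: e_def)
  obtain \<delta> where "0 < \<delta>" and near: "\<And>x. dist x l < \<delta> \<Longrightarrow> e < h x"
  proof -
    obtain \<delta> where "0 < \<delta>" and close: "\<And>x. dist x l < \<delta> \<Longrightarrow> dist (h x) (h l) < e"
      using \<open>isCont h l\<close> \<open>0 < e\<close> unfolding continuous_at_eps_delta by blast
    have "e < h x" if "dist x l < \<delta>" for x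
      using close[OF that] unfolding dist_real_def abs_diff_less_iff e_def by linarith
    with \<open>0 < \<delta>\<close> show thesis by (rule that)
  qed
  define d where "d = \<delta> / 2"
  have "0 < d" using \<open>0 < \<delta>\<close> by (simp add: d_def)
  have "0 < e * d / C" using \<open>0 < e\<close> \<open>0 < d\<close> \<open>0 < C\<close> by simp
  then obtain N where "\<forall>m\<ge>N. \<forall>n. norm (\<Sum>k = m..<n. \<alpha> k * h (v k)) < e * d / C"
    using summable unfolding summable_Cauchy by blast
  moreover have "0 \<le> (\<Sum>k = m..<n. \<alpha> k * h (v k))" for m n
    by (intro sum_nonneg mult_nonneg_nonneg \<alpha>_nonneg h_nonneg)
  ultimately have tail: "\<And>m n. N \<le> m \<Longrightarrow> (\<Sum>k = m..<n. \<alpha> k * h (v k)) < e * d / C"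
    by simp
  obtain n0 where "N \<le> n0" "dist (v n0) l < d"
  proof -
    obtain r where "strict_mono r" "(v \<circ> r) \<longlonglongrightarrow> l"
      using \<open>limit_point v l\<close> unfolding limit_point_def by blast
    then obtain j0 where "\<And>j. j0 \<le> j \<Longrightarrow> dist (v (r j)) l < d"
      using \<open>0 < d\<close> unfolding lim_sequentially by auto
    moreover have "N \<le> r (max j0 N)"
      using seq_suble[OF \<open>strict_mono r\<close>, of "max j0 N"] by simp
    ultimately show thesis using that by simp
  qed
  obtain K where exceed: "d / C \<le> sum \<alpha> {n0..<K}" and below: "\<And>k. k < K \<Longrightarrow> sum \<alpha> {n0..<k} < d / C"
    using not_summable_obtain_first_exceeding[OF \<alpha>_nonneg \<open>\<not> summable \<alpha>\<close>] by blast
  have "\<alpha> k * e \<le> \<alpha> k * h (v k)" if "k \<in> {n0..<K}" for k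
  proof -
    have "norm (v k - v n0) \<le> C * sum \<alpha> {n0..<k}"
      using that by (intro norm_diff_le_sum_steps step) simp
    also have "\<dots> < d" using below[of k] that \<open>0 < C\<close> by (simp add: field_simps)
    finally have "dist (v k) l < \<delta>"
      using \<open>dist (v n0) l < d\<close> dist_triangle[of "v k" l "v n0"] by (simp add: d_def dist_norm)
    then have "e \<le> h (v k)" using near less_imp_le by blast
    then show ?thesis using \<alpha>_nonneg[of k] by (rule mult_left_mono)
  qed
  then have "sum \<alpha> {n0..<K} * e \<le> (\<Sum>k = n0..<K. \<alpha> k * h (v k))"
    unfolding sum_distrib_right by (rule sum_mono)
  moreover have "e * d / C \<le> sum \<alpha> {n0..<K} * e"
    using exceed \<open>0 < e\<close> \<open>0 < C\<close> by (simp add: field_simps)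
  ultimately show False using tail[OF \<open>N \<le> n0\<close>, of K] by linarith
qed

lemma summable_of_descent:
  fixes e E b :: "nat \<Rightarrow> real"
  assumes descent: "\<And>k. e k \<le> E k - E (Suc k) + b k"
    and "\<And>k. 0 \<le> e k" and "\<And>k. 0 \<le> b k" and "summable b" and lower: "\<And>k. B \<le> E k"
  shows "summable e"
proof (rule summableI_nonneg_bounded)
  fix N
  have "sum e {..<N} \<le> (\<Sum>k<N. E k - E (Suc k) + b k)" by (intro sum_mono descent)
  also have "\<dots> = E 0 - E N + sum b {..<N}" by (simp add: sum.distrib sum_lessThan_telescope')
  also have "\<dots> \<le> E 0 - B + suminf b"
    using lower[of N] sum_le_suminf[OF \<open>summable b\<close>, of "{..<N}"] \<open>\<And>k. 0 \<le> b k\<close> by force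
  finally show "sum e {..<N} \<le> E 0 - B + suminf b" .
qed (fact \<open>\<And>k. 0 \<le> e k\<close>)

lemma AE_summable_of_summable_integrals:
  fixes s :: "nat \<Rightarrow> 'a \<Rightarrow> real"
  assumes [measurable]: "\<And>k. s k \<in> borel_measurable M"
    and nonneg: "\<And>k x. 0 \<le> s k x" and integrable: "\<And>k. integrable M (s k)"
    and "summable (\<lambda>k. \<integral>x. s k x \<partial>M)"
  shows "AE x in M. summable (\<lambda>k. s k x)"
proof -
  have "(\<integral>\<^sup>+x. (\<Sum>k. ennreal (s k x)) \<partial>M) = (\<Sum>k. \<integral>\<^sup>+x. ennreal (s k x) \<partial>M)"
    by (rule nn_integral_suminf) measurable
  also have "\<dots> = (\<Sum>k. ennreal (\<integral>x. s k x \<partial>M))"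
    by (intro suminf_cong nn_integral_eq_integral integrable AE_I2 nonneg)
  also have "\<dots> = ennreal (\<Sum>k. \<integral>x. s k x \<partial>M)"
    by (intro suminf_ennreal2 integral_nonneg_AE AE_I2 nonneg assms(4))
  finally have "(\<integral>\<^sup>+x. (\<Sum>k. ennreal (s k x)) \<partial>M) \<noteq> \<infinity>" by simp
  then have "AE x in M. (\<Sum>k. ennreal (s k x)) \<noteq> \<infinity>"
    by (intro nn_integral_PInf_AE) measurable
  then show ?thesis by eventually_elim (auto intro: summable_suminf_not_top nonneg)
qed

section \<open>One step of the deflated iteration\<close>

lemma descent_quotient_le:
  fixes a n h F Fu G :: real
  assumes "0 \<le> a" "0 \<le> n" "\<bar>F\<bar> \<le> h" "\<bar>Fu\<bar> \<le> h * n\<^sup>2" "\<bar>G\<bar> \<le> 2 * h * n"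
  shows "(F - 2 * a * G + a\<^sup>2 * Fu) / (1 + a\<^sup>2 * n\<^sup>2) \<le> F - 2 * a * G + 4 * h * a\<^sup>2 * n\<^sup>2"
proof -
  have "0 \<le> h" using assms(3) by linarith
  have "a\<^sup>2 * Fu \<le> a\<^sup>2 * (h * n\<^sup>2)" using assms by (intro mult_left_mono) auto
  moreover have "- h * (a\<^sup>2 * n\<^sup>2) \<le> F * (a\<^sup>2 * n\<^sup>2)" using assms by (intro mult_right_mono) auto
  moreover have "a * G * (a\<^sup>2 * n\<^sup>2) \<le> a * (2 * h * n) * (a\<^sup>2 * n\<^sup>2)"
    using assms by (intro mult_right_mono mult_left_mono) auto
  moreover have "0 \<le> 2 * h * a\<^sup>2 * n\<^sup>2 * ((1 - a * n)\<^sup>2 + a\<^sup>2 * n\<^sup>2)" using \<open>0 \<le> h\<close> by simp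
  ultimately have "F - 2 * a * G + a\<^sup>2 * Fu \<le> (F - 2 * a * G + 4 * h * a\<^sup>2 * n\<^sup>2) * (1 + a\<^sup>2 * n\<^sup>2)"
    by (simp add: algebra_simps power2_eq_square)
  then show ?thesis by (simp add: add_pos_nonneg divide_le_eq)
qed

lemma norm_orthogonal_step_sq:
  fixes v p :: "'a::real_inner"
  assumes "norm v = 1" and "v \<bullet> p = 0"
  shows "(norm (v - a *\<^sub>R p))\<^sup>2 = 1 + a\<^sup>2 * (norm p)\<^sup>2"
  unfolding dot_square_norm[symmetric] using assms
  by (simp add: inner_diff_left inner_diff_right inner_commute power2_eq_square norm_eq_1)

text \<open>Normalising \<open>v - a p\<close> for a unit vector \<open>v \<bottom> p\<close> moves \<open>v\<close> by at most \<open>2 a \<parallel>p\<parallel>\<close>: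
  \<open>a \<parallel>p\<parallel>\<close> for the step itself and as much again for the rescaling, since \<open>1 \<le> \<parallel>v - a p\<parallel> \<le> 1 + a \<parallel>p\<parallel>\<close>.\<close>

lemma norm_normalized_orthogonal_step_diff_le:
  fixes v p :: "'a::real_inner"
  assumes unit: "norm v = 1" and orth: "v \<bullet> p = 0" and "0 \<le> a"
  defines "w \<equiv> v - a *\<^sub>R p"
  shows "norm ((1 / norm w) *\<^sub>R w - v) \<le> 2 * a * norm p"
proof -
  have "(norm w)\<^sup>2 = 1 + a\<^sup>2 * (norm p)\<^sup>2"
    unfolding w_def using unit orth by (rule norm_orthogonal_step_sq)
  then have "1 \<le> norm w" using power2_le_imp_le[of 1 "norm w"] by simp
  have upper: "norm w \<le> 1 + a * norm p"
    unfolding w_def using norm_triangle_ineq4[of v "a *\<^sub>R p"] unit \<open>0 \<le> a\<close> by simp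
  have "0 < norm w" using \<open>1 \<le> norm w\<close> by linarith
  have "1 / norm w \<le> 1" using \<open>1 \<le> norm w\<close> by (simp add: divide_le_eq_1)
  have "(1 / norm w) *\<^sub>R w - v = (1 / norm w) *\<^sub>R (w - v) + (1 / norm w - 1) *\<^sub>R v"
    by (simp add: algebra_simps)
  then have "norm ((1 / norm w) *\<^sub>R w - v) \<le> norm ((1 / norm w) *\<^sub>R (w - v)) + norm ((1 / norm w - 1) *\<^sub>R v)"
    by (metis norm_triangle_ineq)
  also have "\<dots> = (1 / norm w) * (a * norm p) + (1 - 1 / norm w)"
    using \<open>1 / norm w \<le> 1\<close> unit \<open>0 \<le> a\<close> by (simp add: w_def)
  also have "\<dots> \<le> a * norm p + (norm w - 1)"
  proof (rule add_mono)
    show "1 / norm w * (a * norm p) \<le> a * norm p"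
      using \<open>1 / norm w \<le> 1\<close> \<open>0 \<le> a\<close> by (intro mult_left_le_one_le) auto
    have "1 - 1 / norm w = (norm w - 1) / norm w"
      using \<open>0 < norm w\<close> by (simp add: diff_divide_distrib)
    also have "\<dots> \<le> norm w - 1"
      using \<open>0 < norm w\<close> \<open>1 \<le> norm w\<close>
      by (intro mult_imp_div_pos_le) (simp_all add: mult_le_cancel_left1)
    finally show "1 - 1 / norm w \<le> norm w - 1" .
  qed
  finally show ?thesis using upper by linarith
qed

locale deflated_oja =
  fixes H :: "real^'d^'d" and vs :: "nat \<Rightarrow> real^'d" and kbar :: nat and lam :: "nat \<Rightarrow> real"
  assumes H_sym: "transpose H = H"
    and vs_orth: "\<And>i j. i \<in> {1..<kbar} \<Longrightarrow> j \<in> {1..<kbar} \<Longrightarrow>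
                     vs i \<bullet> vs j = (if i = j then 1 else 0)"
    and vs_eig: "\<And>i. i \<in> {1..<kbar} \<Longrightarrow> H *v vs i = lam i *\<^sub>R vs i"
begin

definition perp_vs :: "real^'d \<Rightarrow> bool" where
  "perp_vs v \<longleftrightarrow> (\<forall>i\<in>{1..<kbar}. v \<bullet> vs i = 0)"

definition tangent_proj :: "real^'d \<Rightarrow> real^'d \<Rightarrow> real^'d" where
  "tangent_proj v y = y - (v \<bullet> y) *\<^sub>R v - (\<Sum>i\<in>{1..<kbar}. (vs i \<bullet> y) *\<^sub>R vs i)"

definition rayleigh :: "real^'d \<Rightarrow> real" where
  "rayleigh v = v \<bullet> (H *v v)"

definition rayleigh_grad :: "real^'d \<Rightarrow> real^'d" where
  "rayleigh_grad v = H *v v - rayleigh v *\<^sub>R v"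

lemma oja_step_eq:
  "oja_step a vs kbar Hw v = (let w = v - a *\<^sub>R tangent_proj v (Hw *v v) in (1 / norm w) *\<^sub>R w)"
  by (simp add: oja_step_def tangent_proj_def matrix_vector_mul_assoc[symmetric]
      matrix_vector_mult_diff_rdistrib outer_mult_vec sum_matrix_vector_mult)

lemma perp_vs_diff: "perp_vs v \<Longrightarrow> perp_vs w \<Longrightarrow> perp_vs (v - w)"
  by (simp add: perp_vs_def inner_diff_left)

lemma perp_vs_scaleR: "perp_vs v \<Longrightarrow> perp_vs (c *\<^sub>R v)"
  by (simp add: perp_vs_def)

lemma perp_vs_H: "perp_vs v \<Longrightarrow> perp_vs (H *v v)"
  by (simp add: perp_vs_def inner_symmetric_matrix_vector_mult[OF H_sym, symmetric] vs_eig)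

lemma inner_vs_tangent_proj:
  assumes "perp_vs v" "j \<in> {1..<kbar}"
  shows "vs j \<bullet> tangent_proj v y = 0"
proof -
  have "vs j \<bullet> (\<Sum>i\<in>{1..<kbar}. (vs i \<bullet> y) *\<^sub>R vs i) = (\<Sum>i\<in>{1..<kbar}. if i = j then vs j \<bullet> y else 0)"
    unfolding inner_sum_right by (rule sum.cong) (use assms(2) vs_orth in auto)
  then show ?thesis
    using assms by (simp add: tangent_proj_def inner_diff_right perp_vs_def inner_commute)
qed

lemma perp_vs_tangent_proj: "perp_vs v \<Longrightarrow> perp_vs (tangent_proj v y)"
  using inner_vs_tangent_proj by (simp add: perp_vs_def inner_commute)

lemma inner_tangent_proj_perp:
  assumes "perp_vs w" "w \<bullet> v = 0"
  shows "w \<bullet> tangent_proj v y = w \<bullet> y"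
  using assms by (simp add: perp_vs_def tangent_proj_def inner_diff_right inner_sum_right)

lemma inner_tangent_proj_self:
  assumes "perp_vs v" "norm v = 1"
  shows "v \<bullet> tangent_proj v y = 0"
  using assms by (simp add: perp_vs_def tangent_proj_def inner_diff_right inner_sum_right norm_eq_1)

text \<open>For a unit \<open>v \<in> span vs\<^sup>\<bottom>\<close> this is an orthogonal projection.\<close>

lemma norm_tangent_proj_le:
  assumes "perp_vs v" "norm v = 1"
  shows "norm (tangent_proj v y) \<le> norm y"
proof -
  define p where "p = tangent_proj v y"
  have "y - p = (v \<bullet> y) *\<^sub>R v + (\<Sum>i\<in>{1..<kbar}. (vs i \<bullet> y) *\<^sub>R vs i)"
    by (simp add: p_def tangent_proj_def)
  moreover have "p \<bullet> v = 0"
    using inner_tangent_proj_self[OF assms] by (simp add: p_def inner_commute)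
  moreover have "p \<bullet> vs i = 0" if "i \<in> {1..<kbar}" for i
    using inner_vs_tangent_proj[OF assms(1) that] by (simp add: p_def inner_commute)
  ultimately have "p \<bullet> (y - p) = 0" by (simp add: inner_add_right inner_sum_right)
  then have "norm p * norm p \<le> norm p * norm y"
    using norm_cauchy_schwarz[of p y] by (simp add: inner_diff_right norm_eq_sqrt_inner)
  then show ?thesis unfolding p_def by (cases "tangent_proj v y = 0") (auto simp: mult_le_cancel_left)
qed

lemma rayleigh_scaleR: "rayleigh (c *\<^sub>R x) = c\<^sup>2 * rayleigh x"
  by (simp add: rayleigh_def matrix_vector_mult_scaleR power2_eq_square)

lemma abs_rayleigh_le: "\<bar>rayleigh x\<bar> \<le> spec_norm H * (norm x)\<^sup>2"
proof -
  have "\<bar>rayleigh x\<bar> \<le> norm x * norm (H *v x)" unfolding rayleigh_def by (rule Cauchy_Schwarz_ineq2)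
  also have "\<dots> \<le> norm x * (spec_norm H * norm x)"
    by (intro mult_left_mono norm_matrix_vector_mult_le) auto
  finally show ?thesis by (simp add: power2_eq_square mult_ac)
qed

lemma inner_rayleigh_grad_self:
  assumes "norm v = 1"
  shows "rayleigh_grad v \<bullet> v = 0"
proof -
  have "v \<bullet> rayleigh_grad v = rayleigh v - rayleigh v * (v \<bullet> v)"
    by (simp add: rayleigh_grad_def rayleigh_def inner_diff_right)
  then show ?thesis using assms by (simp add: norm_eq_1 inner_commute)
qed

lemma perp_vs_rayleigh_grad: "perp_vs v \<Longrightarrow> perp_vs (rayleigh_grad v)"
  unfolding rayleigh_grad_def by (intro perp_vs_diff perp_vs_H perp_vs_scaleR)

lemma norm_rayleigh_grad_le: "norm v = 1 \<Longrightarrow> norm (rayleigh_grad v) \<le> 2 * spec_norm H"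
  using norm_triangle_ineq4[of "H *v v" "rayleigh v *\<^sub>R v"] norm_matrix_vector_mult_le[of H v]
    abs_rayleigh_le[of v]
  by (simp add: rayleigh_grad_def)

lemma rayleigh_grad_inner_H:
  assumes "norm v = 1"
  shows "rayleigh_grad v \<bullet> (H *v v) = (norm (rayleigh_grad v))\<^sup>2"
proof -
  have "H *v v = rayleigh_grad v + rayleigh v *\<^sub>R v" by (simp add: rayleigh_grad_def)
  then show ?thesis
    using inner_rayleigh_grad_self[OF assms] by (simp add: inner_add_right power2_norm_eq_inner)
qed

lemma isCont_rayleigh_grad: "isCont rayleigh_grad v"
  unfolding rayleigh_grad_def[abs_def] rayleigh_def by (intro continuous_intros)

lemma rayleigh_orthogonal_step:
  assumes "v \<bullet> u = 0"
  shows "rayleigh (v - a *\<^sub>R u) = rayleigh v - 2 * a * (rayleigh_grad v \<bullet> u) + a\<^sup>2 * rayleigh u"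
proof -
  have "rayleigh_grad v \<bullet> u = (H *v v) \<bullet> u"
    using assms by (simp add: rayleigh_grad_def inner_diff_left)
  then show ?thesis
    by (simp add: rayleigh_def matrix_vector_mult_diff_distrib matrix_vector_mult_scaleR
        inner_diff_left inner_diff_right inner_symmetric_matrix_vector_mult[OF H_sym, of v u]
        inner_commute[of u "H *v v"] power2_eq_square algebra_simps)
qed

lemma measurable_oja_step[measurable (raw)]:
  assumes [measurable]: "f \<in> borel_measurable M" "g \<in> borel_measurable M"
  shows "(\<lambda>x. oja_step a vs kbar (f x) (g x)) \<in> borel_measurable M"
  unfolding oja_step_eq tangent_proj_def Let_def by measurable

lemma measurable_rayleigh[measurable]: "rayleigh \<in> borel_measurable borel"
  unfolding rayleigh_def[abs_def] by measurable

lemma measurable_rayleigh_grad[measurable]: "rayleigh_grad \<in> borel_measurable borel"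
  unfolding rayleigh_grad_def[abs_def] by measurable

lemma oja_step_unit_perp:
  assumes "norm v = 1" "perp_vs v"
  shows "norm (oja_step a vs kbar Hw v) = 1 \<and> perp_vs (oja_step a vs kbar Hw v)"
proof -
  define w where "w = v - a *\<^sub>R tangent_proj v (Hw *v v)"
  have "v \<bullet> w = 1"
    using assms inner_tangent_proj_self[OF assms(2,1)] by (simp add: w_def inner_diff_right norm_eq_1)
  then have "w \<noteq> 0" by auto
  moreover have "perp_vs w"
    unfolding w_def by (intro perp_vs_diff perp_vs_scaleR perp_vs_tangent_proj assms(2))
  ultimately show ?thesis by (simp add: oja_step_eq w_def[symmetric] perp_vs_scaleR)
qed

lemma norm_oja_step_diff_le:
  assumes "norm v = 1" "perp_vs v" "0 \<le> a"
  shows "norm (oja_step a vs kbar Hw v - v) \<le> 2 * a * norm (Hw *v v)"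
proof -
  have "norm (oja_step a vs kbar Hw v - v) \<le> 2 * a * norm (tangent_proj v (Hw *v v))"
    unfolding oja_step_eq Let_def
    by (rule norm_normalized_orthogonal_step_diff_le) (use assms inner_tangent_proj_self in auto)
  also have "\<dots> \<le> 2 * a * norm (Hw *v v)"
    using assms by (intro mult_left_mono norm_tangent_proj_le) auto
  finally show ?thesis .
qed

text \<open>The Rayleigh quotient decreases along the step up to second order; the first-order
  term involves the sample \<open>Hw\<close> only through \<open>rayleigh_grad v \<bullet> (Hw *v v)\<close>, whose mean is
  \<open>\<parallel>rayleigh_grad v\<parallel>\<^sup>2\<close>.\<close>

lemma rayleigh_oja_step_le:
  assumes unit: "norm v = 1" and perp: "perp_vs v" and "0 \<le> a"
  shows "rayleigh (oja_step a vs kbar Hw v)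
    \<le> rayleigh v - 2 * a * (rayleigh_grad v \<bullet> (Hw *v v)) + 4 * spec_norm H * a\<^sup>2 * (norm (Hw *v v))\<^sup>2"
proof -
  define p where "p = tangent_proj v (Hw *v v)"
  define w where "w = v - a *\<^sub>R p"
  have "v \<bullet> p = 0" unfolding p_def by (rule inner_tangent_proj_self[OF perp unit])
  have grad_p: "rayleigh_grad v \<bullet> p = rayleigh_grad v \<bullet> (Hw *v v)"
    unfolding p_def using perp_vs_rayleigh_grad[OF perp] inner_rayleigh_grad_self[OF unit]
    by (rule inner_tangent_proj_perp)
  have "\<bar>rayleigh_grad v \<bullet> p\<bar> \<le> 2 * spec_norm H * norm p"
    using Cauchy_Schwarz_ineq2[of "rayleigh_grad v" p] norm_rayleigh_grad_le[OF unit]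
    by (meson mult_right_mono norm_ge_zero order_trans)
  then have "rayleigh w / (1 + a\<^sup>2 * (norm p)\<^sup>2)
      \<le> rayleigh v - 2 * a * (rayleigh_grad v \<bullet> p) + 4 * spec_norm H * a\<^sup>2 * (norm p)\<^sup>2"
    unfolding w_def rayleigh_orthogonal_step[OF \<open>v \<bullet> p = 0\<close>]
    using abs_rayleigh_le[of v] abs_rayleigh_le[of p] unit \<open>0 \<le> a\<close>
    by (intro descent_quotient_le) auto
  also have "\<dots> \<le> rayleigh v - 2 * a * (rayleigh_grad v \<bullet> p) + 4 * spec_norm H * a\<^sup>2 * (norm (Hw *v v))\<^sup>2"
    using norm_tangent_proj_le[OF perp unit, of "Hw *v v"] spec_norm_nonneg[of H]
    by (intro add_left_mono mult_left_mono power_mono) (auto simp: p_def)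
  finally show ?thesis
    using norm_orthogonal_step_sq[OF unit \<open>v \<bullet> p = 0\<close>, of a] grad_p
    by (simp add: oja_step_eq Let_def p_def[symmetric] w_def[symmetric] rayleigh_scaleR power_divide)
qed

end

section \<open>The stochastic iteration\<close>

lemma oja_iter_cong_prefix:
  "(\<And>m. m < n \<Longrightarrow> F m = G m) \<Longrightarrow> oja_iter \<alpha> vs kbar v0 F n = oja_iter \<alpha> vs kbar v0 G n"
  by (induction n) auto

locale deflated_oja_sampled = deflated_oja H vs kbar lam + M: prob_space M + S: prob_space S
  for H :: "real^'d^'d" and vs kbar lam and M :: "'a measure" and S :: "'w measure" +
  fixes Hs :: "'w \<Rightarrow> real^'d^'d" and W :: "nat \<Rightarrow> 'a \<Rightarrow> 'w" and G1 :: real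
    and \<alpha> :: "nat \<Rightarrow> real" and v0 :: "real^'d"
  assumes Hs_meas[measurable]: "Hs \<in> borel_measurable S"
    and Hs_mean: "has_bochner_integral S Hs H"
    and Hs_bdd: "\<And>w. w \<in> space S \<Longrightarrow> spec_norm (Hs w) \<le> G1"
    and W_meas[measurable]: "\<And>n. W n \<in> measurable M S"
    and W_distr: "\<And>n. distr M S (W n) = S"
    and W_indep: "M.indep_vars (\<lambda>_. S) W UNIV"
    and \<alpha>_pos: "\<And>n. 0 < \<alpha> n"
    and \<alpha>_div: "\<not> summable \<alpha>"
    and \<alpha>_sq: "summable (\<lambda>n. (\<alpha> n)\<^sup>2)"
    and v0_unit: "norm v0 = 1"
    and v0_orth: "\<And>i. i \<in> {1..<kbar} \<Longrightarrow> v0 \<bullet> vs i = 0"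
begin

definition iterate :: "nat \<Rightarrow> 'a \<Rightarrow> real^'d" where
  "iterate n x = oja_iter \<alpha> vs kbar v0 (\<lambda>m. Hs (W m x)) n"

text \<open>The iterate as a function of the sample sequence; \<open>iterate n\<close> depends only on the
  first \<open>n\<close> samples, which makes it independent of \<open>W n\<close>.\<close>

definition iterate_of_samples :: "nat \<Rightarrow> (nat \<Rightarrow> 'w) \<Rightarrow> real^'d" where
  "iterate_of_samples n ys = oja_iter \<alpha> vs kbar v0 (\<lambda>m. Hs (ys m)) n"

lemma iterate_Suc: "iterate (Suc n) x = oja_step (\<alpha> n) vs kbar (Hs (W n x)) (iterate n x)"
  by (simp add: iterate_def)

lemma iterate_unit_perp: "norm (iterate n x) = 1 \<and> perp_vs (iterate n x)"
proof (induction n)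
  case 0
  then show ?case using v0_unit v0_orth by (simp add: iterate_def perp_vs_def)
next
  case (Suc n)
  then show ?case unfolding iterate_Suc by (intro oja_step_unit_perp) auto
qed

lemmas norm_iterate[simp] = iterate_unit_perp[THEN conjunct1]
  and perp_vs_iterate = iterate_unit_perp[THEN conjunct2]

lemma G1_nonneg: "0 \<le> G1"
proof -
  obtain w where "w \<in> space S" using S.not_empty by blast
  then show ?thesis using Hs_bdd[of w] spec_norm_nonneg[of "Hs w"] by linarith
qed

lemma norm_sample_iterate_le:
  assumes "x \<in> space M"
  shows "norm (Hs (W k x) *v iterate k x) \<le> G1"
  using norm_matrix_vector_mult_le[of "Hs (W k x)" "iterate k x"] norm_iterate[of k x]
    Hs_bdd[OF measurable_space[OF W_meas assms], of k] by simp

lemma measurable_iterate_of_samples: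
  "{..<n} \<subseteq> I \<Longrightarrow> iterate_of_samples n \<in> borel_measurable (PiM I (\<lambda>_. S))"
proof (induction n)
  case 0
  then show ?case by (simp add: iterate_of_samples_def)
next
  case (Suc n)
  then have "{..<n} \<subseteq> I" "n \<in> I" by auto
  then have [measurable]: "iterate_of_samples n \<in> borel_measurable (PiM I (\<lambda>_. S))"
    and [measurable]: "(\<lambda>ys. Hs (ys n)) \<in> borel_measurable (PiM I (\<lambda>_. S))"
    by (auto intro: Suc.IH measurable_compose[OF measurable_component_singleton[of n I] Hs_meas])
  have "iterate_of_samples (Suc n) = (\<lambda>ys. oja_step (\<alpha> n) vs kbar (Hs (ys n)) (iterate_of_samples n ys))"
    by (simp add: iterate_of_samples_def fun_eq_iff)
  also have "\<dots> \<in> borel_measurable (PiM I (\<lambda>_. S))" by measurable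
  finally show ?case .
qed

lemma iterate_eq_of_samples: "iterate n x = iterate_of_samples n (restrict (\<lambda>i. W i x) {..<n})"
  unfolding iterate_def iterate_of_samples_def by (rule oja_iter_cong_prefix) auto

lemma measurable_iterate[measurable]: "iterate n \<in> borel_measurable M"
proof -
  have "(\<lambda>x. iterate_of_samples n (restrict (\<lambda>i. W i x) {..<n})) \<in> borel_measurable M"
    by (rule measurable_compose[OF measurable_restrict measurable_iterate_of_samples]) auto
  then show ?thesis by (simp add: iterate_eq_of_samples[abs_def])
qed

lemma integral_sample_entry: "(\<integral>x. Hs (W k x) $ i $ j \<partial>M) = H $ i $ j"
proof -
  have "bounded_linear (\<lambda>A::real^'d^'d. A $ i $ j)"
    by (rule bounded_linear_compose[of "\<lambda>x::real^'d. x $ j" "\<lambda>A::real^'d^'d. A $ i",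
          OF bounded_linear_vec_nth bounded_linear_vec_nth])
  from has_bochner_integral_bounded_linear[OF this Hs_mean]
  have "(\<integral>w. Hs w $ i $ j \<partial>S) = H $ i $ j" by (rule has_bochner_integral_integral_eq)
  moreover have "(\<integral>x. Hs (W k x) $ i $ j \<partial>M) = (\<integral>w. Hs w $ i $ j \<partial>distr M S (W k))"
    by (rule integral_distr[symmetric]) simp_all
  ultimately show ?thesis using W_distr by simp
qed

lemma integral_iterate_mult_sample_entry:
  assumes [measurable]: "c \<in> borel_measurable borel" and bound: "\<And>x. \<bar>c (iterate k x)\<bar> \<le> B"
  shows "integrable M (\<lambda>x. c (iterate k x) * Hs (W k x) $ i $ j)"
    and "(\<integral>x. c (iterate k x) * Hs (W k x) $ i $ j \<partial>M) = (\<integral>x. c (iterate k x) \<partial>M) * H $ i $ j"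
proof -
  have "M.indep_var (PiM {..<k} (\<lambda>_. S)) (\<lambda>x. restrict (\<lambda>i. W i x) {..<k})
                    (PiM {k} (\<lambda>_. S)) (\<lambda>x. restrict (\<lambda>i. W i x) {k})"
    by (rule M.indep_var_restrict[OF W_indep]) auto
  moreover have "(\<lambda>ys. c (iterate_of_samples k ys)) \<in> borel_measurable (PiM {..<k} (\<lambda>_. S))"
    using measurable_iterate_of_samples[of k "{..<k}"] by measurable
  moreover have "(\<lambda>ys. Hs (ys k) $ i $ j) \<in> borel_measurable (PiM {k} (\<lambda>_. S))"
  proof -
    have [measurable]: "(\<lambda>ys. Hs (ys k)) \<in> borel_measurable (PiM {k} (\<lambda>_. S))"
      by (intro measurable_compose[OF measurable_component_singleton[of k "{k}"] Hs_meas]) simp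
    show ?thesis by measurable
  qed
  ultimately have "M.indep_var borel ((\<lambda>ys. c (iterate_of_samples k ys)) \<circ> (\<lambda>x. restrict (\<lambda>i. W i x) {..<k}))
      borel ((\<lambda>ys. Hs (ys k) $ i $ j) \<circ> (\<lambda>x. restrict (\<lambda>i. W i x) {k}))"
    by (rule M.indep_var_compose)
  then have indep: "M.indep_var borel (\<lambda>x. c (iterate k x)) borel (\<lambda>x. Hs (W k x) $ i $ j)"
    by (simp add: comp_def iterate_eq_of_samples)
  have int_c: "integrable M (\<lambda>x. c (iterate k x))"
    by (rule M.integrable_const_bound[where B=B]) (auto simp: bound)
  have int_H: "integrable M (\<lambda>x. Hs (W k x) $ i $ j)"
  proof (rule M.integrable_const_bound[where B=G1])
    have "\<bar>Hs (W k x) $ i $ j\<bar> \<le> G1" if "x \<in> space M" for x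
      using abs_matrix_entry_le_spec_norm[of "Hs (W k x)" i j]
        Hs_bdd[OF measurable_space[OF W_meas that], of k] by linarith
    then show "AE x in M. norm (Hs (W k x) $ i $ j) \<le> G1" by (auto intro: AE_I2)
  qed simp
  show "integrable M (\<lambda>x. c (iterate k x) * Hs (W k x) $ i $ j)"
    by (rule M.indep_var_integrable[OF indep int_c int_H])
  show "(\<integral>x. c (iterate k x) * Hs (W k x) $ i $ j \<partial>M) = (\<integral>x. c (iterate k x) \<partial>M) * H $ i $ j"
    using M.indep_var_lebesgue_integral[OF indep int_c int_H] integral_sample_entry by simp
qed

lemma integral_grad_inner_sample:
  "integrable M (\<lambda>x. rayleigh_grad (iterate k x) \<bullet> (Hs (W k x) *v iterate k x))"
  "(\<integral>x. rayleigh_grad (iterate k x) \<bullet> (Hs (W k x) *v iterate k x) \<partial>M)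
     = (\<integral>x. (norm (rayleigh_grad (iterate k x)))\<^sup>2 \<partial>M)"
proof -
  define c where "c i j v = rayleigh_grad v $ i * v $ j" for i j and v :: "real^'d"
  have c_meas[measurable]: "c i j \<in> borel_measurable borel" for i j
    unfolding c_def[abs_def] by measurable
  have c_bound: "\<bar>c i j (iterate k x)\<bar> \<le> 2 * spec_norm H" for i j x
  proof -
    have unit: "norm (iterate k x) = 1" by simp
    have "\<bar>rayleigh_grad (iterate k x) $ i\<bar> \<le> 2 * spec_norm H"
      using component_le_norm_cart[of "rayleigh_grad (iterate k x)" i] norm_rayleigh_grad_le[OF unit]
      by linarith
    moreover have "\<bar>iterate k x $ j\<bar> \<le> 1" using component_le_norm_cart[of "iterate k x" j] unit by simp
    ultimately show ?thesis
      unfolding c_def abs_mult using mult_mono[of _ _ _ 1] spec_norm_nonneg[of H] by force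
  qed
  note sample_entry = integral_iterate_mult_sample_entry[OF c_meas c_bound]
  have int_c: "integrable M (\<lambda>x. c i j (iterate k x))" for i j
    by (rule M.integrable_const_bound[where B="2 * spec_norm H"]) (auto simp: c_bound)
  have expand: "rayleigh_grad v \<bullet> (A *v v) = (\<Sum>i\<in>UNIV. \<Sum>j\<in>UNIV. c i j v * A $ i $ j)" for v A
    unfolding c_def by (rule inner_matrix_vector_mult_expand)
  show "integrable M (\<lambda>x. rayleigh_grad (iterate k x) \<bullet> (Hs (W k x) *v iterate k x))"
    unfolding expand by (intro Bochner_Integration.integrable_sum sample_entry(1))
  have "(\<integral>x. rayleigh_grad (iterate k x) \<bullet> (Hs (W k x) *v iterate k x) \<partial>M)
      = (\<Sum>i\<in>UNIV. \<Sum>j\<in>UNIV. (\<integral>x. c i j (iterate k x) \<partial>M) * H $ i $ j)"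
    unfolding expand
    by (simp add: Bochner_Integration.integral_sum Bochner_Integration.integrable_sum sample_entry)
  also have "\<dots> = (\<integral>x. rayleigh_grad (iterate k x) \<bullet> (H *v iterate k x) \<partial>M)"
    unfolding expand
    by (simp add: Bochner_Integration.integral_sum Bochner_Integration.integrable_sum int_c)
  also have "\<dots> = (\<integral>x. (norm (rayleigh_grad (iterate k x)))\<^sup>2 \<partial>M)"
    by (simp add: rayleigh_grad_inner_H)
  finally show "(\<integral>x. rayleigh_grad (iterate k x) \<bullet> (Hs (W k x) *v iterate k x) \<partial>M)
     = (\<integral>x. (norm (rayleigh_grad (iterate k x)))\<^sup>2 \<partial>M)" .
qed

lemma abs_rayleigh_iterate_le: "\<bar>rayleigh (iterate k x)\<bar> \<le> spec_norm H"
  using abs_rayleigh_le[of "iterate k x"] by simp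

lemma integrable_rayleigh_iterate: "integrable M (\<lambda>x. rayleigh (iterate k x))"
  using abs_rayleigh_iterate_le by (intro M.integrable_const_bound[where B="spec_norm H"] AE_I2) auto

lemma abs_integral_rayleigh_iterate_le: "\<bar>\<integral>x. rayleigh (iterate k x) \<partial>M\<bar> \<le> spec_norm H"
proof -
  have "\<bar>\<integral>x. rayleigh (iterate k x) \<partial>M\<bar> \<le> (\<integral>x. \<bar>rayleigh (iterate k x)\<bar> \<partial>M)"
    by (rule integral_abs_bound)
  also have "\<dots> \<le> (\<integral>x. spec_norm H \<partial>M)"
    using abs_rayleigh_iterate_le integrable_rayleigh_iterate by (intro integral_mono) auto
  finally show ?thesis by (simp add: M.prob_space)
qed

lemma integrable_norm_rayleigh_grad_iterate:
  "integrable M (\<lambda>x. (norm (rayleigh_grad (iterate k x)))\<^sup>2)"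
proof (rule M.integrable_const_bound[where B="(2 * spec_norm H)\<^sup>2"])
  have "(norm (rayleigh_grad (iterate k x)))\<^sup>2 \<le> (2 * spec_norm H)\<^sup>2" for x
    by (intro power_mono norm_rayleigh_grad_le) simp_all
  then show "AE x in M. norm ((norm (rayleigh_grad (iterate k x)))\<^sup>2) \<le> (2 * spec_norm H)\<^sup>2"
    by (intro AE_I2) simp
qed measurable

lemma integral_rayleigh_descent:
  "2 * \<alpha> k * (\<integral>x. (norm (rayleigh_grad (iterate k x)))\<^sup>2 \<partial>M)
     \<le> (\<integral>x. rayleigh (iterate k x) \<partial>M) - (\<integral>x. rayleigh (iterate (Suc k) x) \<partial>M)
       + 4 * spec_norm H * G1\<^sup>2 * (\<alpha> k)\<^sup>2"
proof -
  define Z where "Z x = rayleigh_grad (iterate k x) \<bullet> (Hs (W k x) *v iterate k x)" for x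
  have "rayleigh (iterate (Suc k) x) \<le> rayleigh (iterate k x) - 2 * \<alpha> k * Z x + 4 * spec_norm H * G1\<^sup>2 * (\<alpha> k)\<^sup>2"
    if "x \<in> space M" for x
  proof -
    have "(norm (Hs (W k x) *v iterate k x))\<^sup>2 \<le> G1\<^sup>2"
      using norm_sample_iterate_le[OF that] by (intro power_mono) auto
    then have "4 * spec_norm H * (\<alpha> k)\<^sup>2 * (norm (Hs (W k x) *v iterate k x))\<^sup>2
        \<le> 4 * spec_norm H * (\<alpha> k)\<^sup>2 * G1\<^sup>2"
      using spec_norm_nonneg[of H] by (intro mult_left_mono) auto
    then show ?thesis
      using rayleigh_oja_step_le[of "iterate k x" "\<alpha> k" "Hs (W k x)"] perp_vs_iterate[of k x]
        \<alpha>_pos[of k]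
      by (simp add: iterate_Suc Z_def mult_ac)
  qed
  then have "(\<integral>x. rayleigh (iterate (Suc k) x) \<partial>M)
      \<le> (\<integral>x. rayleigh (iterate k x) - 2 * \<alpha> k * Z x + 4 * spec_norm H * G1\<^sup>2 * (\<alpha> k)\<^sup>2 \<partial>M)"
    using integral_grad_inner_sample(1) integrable_rayleigh_iterate
    by (intro integral_mono_AE AE_I2) (auto simp: Z_def)
  also have "\<dots> = (\<integral>x. rayleigh (iterate k x) \<partial>M) - 2 * \<alpha> k * (\<integral>x. Z x \<partial>M)
      + 4 * spec_norm H * G1\<^sup>2 * (\<alpha> k)\<^sup>2"
    using integral_grad_inner_sample(1) integrable_rayleigh_iterate
    by (simp add: Z_def M.prob_space)
  finally show ?thesis using integral_grad_inner_sample(2) by (simp add: Z_def)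
qed

lemma AE_summable_weighted_grad:
  "AE x in M. summable (\<lambda>k. \<alpha> k * (norm (rayleigh_grad (iterate k x)))\<^sup>2)"
proof (rule AE_summable_of_summable_integrals)
  let ?e = "\<lambda>k. \<integral>x. \<alpha> k * (norm (rayleigh_grad (iterate k x)))\<^sup>2 \<partial>M"
  have "summable (\<lambda>k. 2 * ?e k)"
  proof (rule summable_of_descent)
    show "2 * ?e k \<le> (\<integral>x. rayleigh (iterate k x) \<partial>M) - (\<integral>x. rayleigh (iterate (Suc k) x) \<partial>M)
        + 4 * spec_norm H * G1\<^sup>2 * (\<alpha> k)\<^sup>2" for k
      using integral_rayleigh_descent[of k] by (simp add: mult.assoc)
    show "0 \<le> 2 * ?e k" for k
      using \<alpha>_pos[of k] by (simp add: integral_nonneg_AE)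
    show "0 \<le> 4 * spec_norm H * G1\<^sup>2 * (\<alpha> k)\<^sup>2" for k
      using spec_norm_nonneg[of H] by simp
    show "summable (\<lambda>k. 4 * spec_norm H * G1\<^sup>2 * (\<alpha> k)\<^sup>2)"
      using \<alpha>_sq by simp
    show "- spec_norm H \<le> (\<integral>x. rayleigh (iterate k x) \<partial>M)" for k
      using abs_integral_rayleigh_iterate_le[of k] by linarith
  qed
  then show "summable ?e" by simp
  show "0 \<le> \<alpha> k * (norm (rayleigh_grad (iterate k x)))\<^sup>2" for k x
    using \<alpha>_pos[of k] by simp
  show "integrable M (\<lambda>x. \<alpha> k * (norm (rayleigh_grad (iterate k x)))\<^sup>2)" for k
    using integrable_norm_rayleigh_grad_iterate by simp
qed measurable

lemma AE_limit_point_eigenvector: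
  "AE x in M. \<forall>vinf. limit_point (oja_iter \<alpha> vs kbar v0 (\<lambda>n. Hs (W n x))) vinf
     \<longrightarrow> norm vinf = 1 \<and> H *v vinf = rayleigh vinf *\<^sub>R vinf"
  using AE_summable_weighted_grad
proof (rule AE_mp, intro AE_I2 impI allI)
  fix x vinf
  assume "x \<in> space M" and summable: "summable (\<lambda>k. \<alpha> k * (norm (rayleigh_grad (iterate k x)))\<^sup>2)"
    and "limit_point (oja_iter \<alpha> vs kbar v0 (\<lambda>n. Hs (W n x))) vinf"
  then have lp: "limit_point (\<lambda>n. iterate n x) vinf" by (simp add: iterate_def[abs_def])
  have "(norm (rayleigh_grad vinf))\<^sup>2 = 0"
  proof (rule limit_point_zero_of_summable_weighted[OF _ _ _ \<alpha>_div _ summable _ lp])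
    show "norm (iterate (Suc n) x - iterate n x) \<le> (2 * G1 + 1) * \<alpha> n" for n
    proof -
      have "norm (iterate (Suc n) x - iterate n x) \<le> 2 * \<alpha> n * norm (Hs (W n x) *v iterate n x)"
        unfolding iterate_Suc using perp_vs_iterate \<alpha>_pos[of n]
        by (intro norm_oja_step_diff_le) auto
      also have "\<dots> \<le> 2 * \<alpha> n * G1"
        using norm_sample_iterate_le[OF \<open>x \<in> space M\<close>, of n] \<alpha>_pos[of n]
        by (intro mult_left_mono) auto
      also have "\<dots> \<le> (2 * G1 + 1) * \<alpha> n" using \<alpha>_pos[of n] by (simp add: algebra_simps)
      finally show ?thesis .
    qed
    show "isCont (\<lambda>v. (norm (rayleigh_grad v))\<^sup>2) vinf"
      by (intro continuous_intros isCont_rayleigh_grad)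
  qed (use G1_nonneg \<alpha>_pos less_imp_le in auto)
  then have "H *v vinf = rayleigh vinf *\<^sub>R vinf" by (simp add: rayleigh_grad_def)
  moreover obtain r where "strict_mono r" "((\<lambda>n. iterate n x) \<circ> r) \<longlonglongrightarrow> vinf"
    using lp unfolding limit_point_def by blast
  then have "(\<lambda>n. norm (iterate (r n) x)) \<longlonglongrightarrow> norm vinf"
    using tendsto_norm by (force simp: o_def)
  then have "norm vinf = 1" by (simp add: LIMSEQ_const_iff)
  ultimately show "norm vinf = 1 \<and> H *v vinf = rayleigh vinf *\<^sub>R vinf" by simp
qed

end

theorem proposition4p11:
  fixes M :: "'a measure" and S :: "'w measure"
    and H :: "real^'d^'d" and Hs :: "'w \<Rightarrow> real^'d^'d"
    and W :: "nat \<Rightarrow> 'a \<Rightarrow> 'w"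
    and \<sigma> G1 :: real and \<alpha> :: "nat \<Rightarrow> real"
    and kbar :: nat and vs :: "nat \<Rightarrow> real^'d" and lam :: "nat \<Rightarrow> real"
    and v0 :: "real^'d"
  assumes M: "prob_space M" and S: "prob_space S"
    and H_sym: "transpose H = H"
    and Hs_meas: "Hs \<in> borel_measurable S"
    and Hs_sym: "\<And>w. w \<in> space S \<Longrightarrow> transpose (Hs w) = Hs w"
    and Hs_mean: "has_bochner_integral S Hs H"
    and Hs_var: "integrable S (\<lambda>w. (spec_norm (Hs w))\<^sup>2)"
              "(\<integral>w. (spec_norm (Hs w))\<^sup>2 \<partial>S) \<le> \<sigma>\<^sup>2"
    and Hs_bdd: "\<And>w. w \<in> space S \<Longrightarrow> spec_norm (Hs w) \<le> G1"
    and W_meas: "\<And>n. W n \<in> measurable M S"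
    and W_distr: "\<And>n. distr M S (W n) = S"
    and W_indep: "prob_space.indep_vars M (\<lambda>_. S) W UNIV"
    and \<alpha>_pos: "\<And>n. \<alpha> n > 0"
    and \<alpha>_div: "\<not> summable \<alpha>"
    and \<alpha>_sq: "summable (\<lambda>n. (\<alpha> n)\<^sup>2)"
    and kbar: "2 \<le> kbar" "kbar \<le> CARD('d)"
    and vs_orth: "\<And>i j. i \<in> {1..<kbar} \<Longrightarrow> j \<in> {1..<kbar} \<Longrightarrow>
                     vs i \<bullet> vs j = (if i = j then 1 else 0)"
    and vs_eig: "\<And>i. i \<in> {1..<kbar} \<Longrightarrow> H *v vs i = lam i *\<^sub>R vs i"
    and v0_unit: "norm v0 = 1"
    and v0_orth: "\<And>i. i \<in> {1..<kbar} \<Longrightarrow> v0 \<bullet> vs i = 0"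
  shows "AE x in M. \<forall>vinf.
           limit_point (oja_iter \<alpha> vs kbar v0 (\<lambda>n. Hs (W n x))) vinf \<and>
           vinf \<notin> span (vs ` {1..<kbar})
           \<longrightarrow> vinf \<noteq> 0 \<and> (\<exists>\<mu>. H *v vinf = \<mu> *\<^sub>R vinf)"
proof -
  \<comment> \<open>The uniform bound \<open>G1\<close> makes the variance bound, the symmetry of the samples and the
    range of \<open>kbar\<close> superfluous, and every limit point is a unit vector.\<close>
  have "deflated_oja_sampled H vs kbar lam M S Hs W G1 \<alpha> v0"
    unfolding deflated_oja_sampled_def deflated_oja_sampled_axioms_def deflated_oja_def
    using M S H_sym vs_orth vs_eig Hs_meas Hs_mean Hs_bdd W_meas W_distr W_indep \<alpha>_pos \<alpha>_div \<alpha>_sq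
      v0_unit v0_orth
    by simp
  then interpret deflated_oja_sampled H vs kbar lam M S Hs W G1 \<alpha> v0 .
  show ?thesis
    using AE_limit_point_eigenvector by eventually_elim (metis norm_zero zero_neq_one)
qed

end
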